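(* Let $T>0$ and let $d_M,d_I:\mathbb{R}\to(0,\infty)$, $D_I:\mathbb{R}\to[0,\infty)$, $\tau:\mathbb{R}\to(0,\infty)$, $p:\mathbb{R}\to[0,\infty)$ be $C^1$ and $T$-periodic, and let $h\in C^1([0,\infty);[0,\infty))$. Assume: (a) there are numbers $0<\alpha\le\beta<t_\alpha\le t_\beta<T$ with $t_\alpha-\tau(t_\alpha)=\alpha$, $t_\beta-\tau(t_\beta)=\beta$, and $p(t)=0$ for $t\in[0,\alpha]\cup[\beta,T]$; (b) $\tau'(t)<1$ for all $t\in\mathbb{R}$; (c) $h(0)=0$, $\lim_{z\to+\infty}h(z)=0$, and there is $z^*>0$ such that $h$ is increasing on $[0,z^* )$ and decreasing on $[z^*,+\infty)$; (d) $h(\lambda z)\ge\lambda h(z)$ for all $z\ge0$, $\lambda\in(0,1)$. Define $\overline{k}_M(t,s)=e^{-\int_s^t d_M(\omega)d\omega}$, $\varepsilon(s)=e^{-\int_{s-\tau(s)}^{s}d_I(\omega)d\omega}$, $g(s)=(1-\tau'(s))\varepsilon(s)p(s-\tau(s))$, and the map $\overline{Q}:[0,\infty)\to[0,\infty)$, $$\overline{Q}[z]=z\,\overline{k}_M(T,0)+\int_{t_\alpha}^{t_\beta}\overline{k}_M(T,s)\,g(s)\,h\big(z\,\overline{k}_M(s-\tau(s),0)\big)\,ds,$$ and the number $$L=\frac{\overline{k}_M(T,0)}{1-\overline{k}_M(T,0)}\int_{t_\alpha}^{t_\beta}\frac{g(s)h'(0)}{\overline{k}_M(s,s-\tau(s))}\,ds.$$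 Then: (i) If $L>1$, then $\overline{Q}$ admits at least one positive fixed point; denoting the minimal positive fixed point by $u^*$, one has $\lim_{n\to\infty}\overline{Q}^n[u]=u^*$ provided that $u\in(0,u^*]$ and $u^*\,\overline{k}_M(\alpha,0)\le z^*$. (ii) If $L<1$, then $\lim_{n\to\infty}\overline{Q}^n[u]=0$ for every $u\ge0$.
   Context: $\overline{Q}$ is the restriction to constant functions of the yearly (time-$T$) map of the mature-population equation of a stage-structured reaction–diffusion model with periodic maturation delay $\tau(t)$, birth rate $b(t,u)=p(t)h(u)$, breeding season $[\alpha,\beta]$ and maturation season $[t_\alpha,t_\beta]$. $\overline{Q}^n$ denotes the $n$-th iterate. *)

theory Defs
  imports "HOL-Analysis.Analysis"
begin

definition oint :: "real \<Rightarrow> real \<Rightarrow> (real \<Rightarrow> real) \<Rightarrow> real" where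
  "oint a b f = (if a \<le> b then integral {a..b} f else - integral {b..a} f)"

definition kM :: "(real \<Rightarrow> real) \<Rightarrow> real \<Rightarrow> real \<Rightarrow> real" where
  "kM dM t s = exp (- oint s t dM)"

definition epsI :: "(real \<Rightarrow> real) \<Rightarrow> (real \<Rightarrow> real) \<Rightarrow> real \<Rightarrow> real" where
  "epsI dI tau s = exp (- oint (s - tau s) s dI)"

definition gfun :: "(real \<Rightarrow> real) \<Rightarrow> (real \<Rightarrow> real) \<Rightarrow> (real \<Rightarrow> real) \<Rightarrow> (real \<Rightarrow> real) \<Rightarrow> real \<Rightarrow> real" where
  "gfun dI tau tau' p s = (1 - tau' s) * epsI dI tau s * p (s - tau s)"

definition Qbar :: "(real \<Rightarrow> real) \<Rightarrow> (real \<Rightarrow> real) \<Rightarrow> (real \<Rightarrow> real) \<Rightarrow> (real \<Rightarrow> real)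
    \<Rightarrow> (real \<Rightarrow> real) \<Rightarrow> (real \<Rightarrow> real) \<Rightarrow> real \<Rightarrow> real \<Rightarrow> real \<Rightarrow> real \<Rightarrow> real" where
  "Qbar dM dI tau tau' p h T ta tb z =
     z * kM dM T 0 + integral {ta..tb}
       (\<lambda>s. kM dM T s * gfun dI tau tau' p s * h (z * kM dM (s - tau s) 0))"

definition Lnum :: "(real \<Rightarrow> real) \<Rightarrow> (real \<Rightarrow> real) \<Rightarrow> (real \<Rightarrow> real) \<Rightarrow> (real \<Rightarrow> real)
    \<Rightarrow> (real \<Rightarrow> real) \<Rightarrow> real \<Rightarrow> real \<Rightarrow> real \<Rightarrow> real \<Rightarrow> real" where
  "Lnum dM dI tau tau' p h'0 T ta tb =
     kM dM T 0 / (1 - kM dM T 0) *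
       integral {ta..tb} (\<lambda>s. gfun dI tau tau' p s * h'0 / kM dM s (s - tau s))"

end

theory Submission
  imports Defs
begin

text \<open>
  On constant functions the yearly map has the form
  \<open>Q z = k z + \<integral> a(s) h(c(s) z) ds\<close> over \<open>[t\<^sub>\<alpha>, t\<^sub>\<beta>]\<close> with \<open>0 < k < 1\<close>, \<open>a \<ge> 0\<close> and \<open>0 < c < 1\<close>.
  Subhomogeneity of \<open>h\<close> makes \<open>h(z)/z\<close> nonincreasing with limit \<open>h'(0)\<close> at \<open>0\<close>, so
  \<open>k z + h(z) W \<le> Q z \<le> (k + h'(0) W) z\<close> where \<open>W = \<integral> a c\<close>, and
  \<open>L = h'(0) W / (1 - k)\<close> by the cocycle property of the survival kernel.
  If \<open>L < 1\<close>, \<open>Q\<close> is a contraction towards \<open>0\<close>. If \<open>L > 1\<close>, then \<open>Q z > z\<close> near \<open>0\<close>,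
  while boundedness of \<open>h\<close> gives \<open>Q z < z\<close> for large \<open>z\<close>; the least positive fixed point
  \<open>u\<^sup>*\<close> exists by the intermediate value theorem, and when \<open>u\<^sup>* c \<le> z\<^sup>*\<close> the map is monotone
  on \<open>[0, u\<^sup>*]\<close>, so the orbits there increase to \<open>u\<^sup>*\<close>.
\<close>

section \<open>Iterating a continuous map of the half-line\<close>

lemma funpow_tendsto_0_if_le_linear:
  fixes Q :: "real \<Rightarrow> real"
  assumes Q: "\<And>z. 0 \<le> z \<Longrightarrow> 0 \<le> Q z \<and> Q z \<le> \<rho> * z"
    and \<rho>: "0 \<le> \<rho>" "\<rho> < 1" and u: "0 \<le> u"
  shows "(\<lambda>n. (Q ^^ n) u) \<longlonglongrightarrow> 0"
proof -
  have bound: "0 \<le> (Q ^^ n) u \<and> (Q ^^ n) u \<le> \<rho> ^ n * u" for n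
  proof (induction n)
    case (Suc n)
    then have "Q ((Q ^^ n) u) \<le> \<rho> * (Q ^^ n) u" "0 \<le> Q ((Q ^^ n) u)" using Q by auto
    moreover have "\<rho> * (Q ^^ n) u \<le> \<rho> * (\<rho> ^ n * u)" using Suc \<rho> by (simp add: mult_left_mono)
    ultimately show ?case by simp
  qed (use u in simp)
  have lower: "\<forall>\<^sub>F n in sequentially. 0 \<le> (Q ^^ n) u"
    and upper: "\<forall>\<^sub>F n in sequentially. (Q ^^ n) u \<le> \<rho> ^ n * u"
    using bound by simp_all
  have "(\<lambda>n. \<rho> ^ n * u) \<longlonglongrightarrow> 0"
    by (intro tendsto_mult_left_zero LIMSEQ_power_zero) (use \<rho> in auto)
  then show ?thesis by (rule tendsto_sandwich[OF lower upper tendsto_const])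
qed

lemma least_positive_fixpoint:
  fixes Q :: "real \<Rightarrow> real"
  assumes cont: "continuous_on {0..} Q"
    and \<delta>: "\<delta> > 0" and above_near_0: "\<And>z. 0 < z \<Longrightarrow> z \<le> \<delta> \<Longrightarrow> z < Q z"
    and z\<^sub>1: "z\<^sub>1 > 0" "Q z\<^sub>1 < z\<^sub>1"
  obtains u where "u > 0" "Q u = u" "\<And>v. v > 0 \<Longrightarrow> Q v = v \<Longrightarrow> u \<le> v"
    "\<And>z. 0 < z \<Longrightarrow> z < u \<Longrightarrow> z < Q z"
proof -
  define S where "S = {v \<in> {\<delta>..}. Q v - v = 0}"
  have cont_diff: "continuous_on {\<delta>..} (\<lambda>v. Q v - v)"
    by (intro continuous_intros continuous_on_subset[OF cont]) (use \<delta> in auto)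
  have "closed S"
    unfolding S_def by (rule continuous_closed_preimage_constant[OF cont_diff]) simp
  have fixpoint_below: "\<exists>x. \<delta> \<le> x \<and> x \<le> z \<and> Q x = x" if "\<delta> \<le> z" "Q z \<le> z" for z
  proof -
    have "continuous_on {\<delta>..z} (\<lambda>v. Q v - v)" by (rule continuous_on_subset[OF cont_diff]) auto
    moreover have "Q \<delta> - \<delta> \<ge> 0" using above_near_0[OF \<delta> order_refl] by simp
    ultimately have "\<exists>x\<ge>\<delta>. x \<le> z \<and> Q x - x = 0"
      using that by (intro IVT2') auto
    then show ?thesis by auto
  qed
  have beyond_\<delta>: "\<delta> < z" if "0 < z" "Q z \<le> z" for z
    using above_near_0[of z] that by (cases "z \<le> \<delta>") auto
  have S_le: "x \<in> S" if "x > 0" "Q x = x" for x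
    using beyond_\<delta>[of x] that unfolding S_def by auto
  obtain x where "x \<in> S"
    using fixpoint_below[of z\<^sub>1] beyond_\<delta>[of z\<^sub>1] z\<^sub>1 unfolding S_def by auto
  have "bdd_below S" unfolding S_def by (rule bdd_belowI[of _ \<delta>]) auto
  define u where "u = Inf S"
  have "u \<in> S"
    unfolding u_def by (rule closed_contains_Inf) (use \<open>x \<in> S\<close> \<open>bdd_below S\<close> \<open>closed S\<close> in auto)
  then have u: "u > 0" "Q u = u" using \<delta> unfolding S_def by auto
  have least: "u \<le> v" if "v > 0" "Q v = v" for v
    unfolding u_def using S_le[OF that] \<open>bdd_below S\<close> by (simp add: cInf_lower)
  have below: "z < Q z" if z: "0 < z" "z < u" for z
  proof (rule ccontr)
    assume "\<not> z < Q z"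
    then obtain y where "\<delta> \<le> y" "y \<le> z" "Q y = y"
      using fixpoint_below[of z] beyond_\<delta>[of z] z by auto
    then show False using least[of y] \<delta> z by auto
  qed
  show ?thesis by (rule that[OF u least below])
qed

lemma funpow_tendsto_least_fixpoint:
  fixes Q :: "real \<Rightarrow> real"
  assumes cont: "continuous_on {0..} Q" and fixed: "Q u\<^sub>0 = u\<^sub>0"
    and above: "\<And>z. 0 < z \<Longrightarrow> z < u\<^sub>0 \<Longrightarrow> z < Q z"
    and mono: "mono_on {0..u\<^sub>0} Q"
    and u: "0 < u" "u \<le> u\<^sub>0"
  shows "(\<lambda>n. (Q ^^ n) u) \<longlonglongrightarrow> u\<^sub>0"
proof -
  define X where "X n = (Q ^^ n) u" for n
  have le_Q: "x \<le> Q x" if "0 < x" "x \<le> u\<^sub>0" for x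
    using above[of x] fixed that by force
  have X_bounds: "u \<le> X n \<and> X n \<le> u\<^sub>0" for n
  proof (induction n)
    case (Suc n)
    have "Q (X n) \<le> Q u\<^sub>0" using mono Suc u by (auto intro: mono_onD)
    moreover have "X n \<le> Q (X n)" using le_Q Suc u by auto
    ultimately show ?case using Suc fixed by (simp add: X_def)
  qed (use u in \<open>simp add: X_def\<close>)
  have "X n \<le> X (Suc n)" for n
    using le_Q[of "X n"] X_bounds[of n] u unfolding X_def by auto
  then have "incseq X" by (rule incseq_SucI)
  moreover have "bdd_above (range X)" using X_bounds by (intro bdd_aboveI[of _ u\<^sub>0]) auto
  ultimately obtain l where lim: "X \<longlonglongrightarrow> l" using LIMSEQ_incseq_SUP by blast
  have l: "u \<le> l" "l \<le> u\<^sub>0"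
    using LIMSEQ_le_const[OF lim, of u] LIMSEQ_le_const2[OF lim, of u\<^sub>0] X_bounds by auto
  have "0 \<le> X n" for n using X_bounds[of n] u by linarith
  then have "(\<lambda>n. Q (X n)) \<longlonglongrightarrow> Q l"
    by (intro continuous_on_tendsto_compose[OF cont lim]) (use l u in auto)
  moreover have "(\<lambda>n. Q (X n)) \<longlonglongrightarrow> l"
    using LIMSEQ_Suc[OF lim] by (simp add: X_def)
  ultimately have "Q l = l" using LIMSEQ_unique by blast
  then have "l = u\<^sub>0" using above[of l] l u by linarith
  then show ?thesis using lim unfolding X_def by simp
qed

section \<open>Oriented integrals and the survival kernel\<close>

lemma oint_add:
  assumes f: "continuous_on UNIV f"
  shows "oint a b f + oint b c f = oint a c f"
proof -
  have "f integrable_on {x..y}" for x y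
    by (rule integrable_continuous_real) (rule continuous_on_subset[OF f], simp)
  then have combine: "integral {x..y} f + integral {y..z} f = integral {x..z} f"
    if "x \<le> y" "y \<le> z" for x y z
    using Henstock_Kurzweil_Integration.integral_combine that by blast
  consider "a \<le> b" "b \<le> c" | "a \<le> c" "c \<le> b" | "b \<le> a" "a \<le> c"
    | "b \<le> c" "c \<le> a" | "c \<le> a" "a \<le> b" | "c \<le> b" "b \<le> a" by linarith
  then show ?thesis
  proof cases
    case 1 then show ?thesis using combine[of a b c] unfolding oint_def by simp
  next
    case 2 then show ?thesis using combine[of a c b] unfolding oint_def by (cases "a = b"; cases "b = c") auto
  next
    case 3 then show ?thesis using combine[of b a c] unfolding oint_def by (cases "a = b"; cases "b = c") auto
  next
    case 4 then show ?thesis using combine[of b c a] unfolding oint_def by (cases "a = b"; cases "a = c") auto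
  next
    case 5 then show ?thesis using combine[of c a b] unfolding oint_def by (cases "a = b"; cases "a = c") auto
  next
    case 6 then show ?thesis using combine[of c b a] unfolding oint_def by (cases "a = b"; cases "b = c") auto
  qed
qed

lemma oint_eq_diff:
  assumes "continuous_on UNIV f"
  shows "oint a b f = oint 0 b f - oint 0 a f"
  using oint_add[OF assms, of 0 a b] by simp

lemma has_real_derivative_oint:
  assumes f: "continuous_on UNIV f"
  shows "((\<lambda>x. oint 0 x f) has_real_derivative f x) (at x)"
proof -
  define a where "a = - (\<bar>x\<bar> + 1)"
  define b where "b = \<bar>x\<bar> + 1"
  have x: "x \<in> {a<..<b}" unfolding a_def b_def by auto
  have eq: "integral {a..y} f - integral {a..0} f = oint 0 y f" if "y \<in> {a<..<b}" for y
    using oint_eq_diff[OF f, of a y] that unfolding a_def oint_def by auto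
  have "((\<lambda>y. integral {a..y} f) has_real_derivative f x) (at x within {a..b})"
    by (rule integral_has_real_derivative) (use continuous_on_subset[OF f] x in auto)
  then have "((\<lambda>y. integral {a..y} f) has_real_derivative f x) (at x within {a<..<b})"
    by (rule DERIV_subset) auto
  then have "((\<lambda>y. integral {a..y} f) has_real_derivative f x) (at x)"
    using at_within_open[OF x] by simp
  then have "((\<lambda>y. integral {a..y} f - integral {a..0} f) has_real_derivative f x) (at x)"
    using DERIV_diff[OF _ DERIV_const] by fastforce
  then show ?thesis
    by (rule has_field_derivative_transform_within_open[OF _ _ x]) (use eq in auto)
qed

lemma continuous_on_oint:
  assumes f: "continuous_on UNIV f" and "continuous_on S a" "continuous_on S b"
  shows "continuous_on S (\<lambda>x. oint (a x) (b x) f)"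
proof -
  have F: "continuous_on UNIV (\<lambda>x. oint 0 x f)"
    using DERIV_continuous_on has_real_derivative_oint[OF f] by blast
  show ?thesis
    unfolding oint_eq_diff[OF f, of "a _"]
    by (intro continuous_intros continuous_on_compose2[OF F] assms) auto
qed

lemma oint_pos:
  assumes f: "continuous_on UNIV f" and pos: "\<And>t. 0 < f t" and "a < b"
  shows "0 < oint a b f"
proof -
  have "oint 0 a f < oint 0 b f"
    using DERIV_pos_imp_increasing[OF \<open>a < b\<close>] has_real_derivative_oint[OF f] pos by blast
  then show ?thesis using oint_eq_diff[OF f, of a b] by simp
qed

lemma kM_mult:
  assumes "continuous_on UNIV dM"
  shows "kM dM t r * kM dM r s = kM dM t s"
  unfolding kM_def using oint_add[OF assms, of s r t] by (simp flip: exp_add)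

lemma kM_less_1:
  assumes "continuous_on UNIV dM" "\<And>t. 0 < dM t" "s < t"
  shows "kM dM t s < 1"
  unfolding kM_def using oint_pos[OF assms] by simp

lemma kM_antimono:
  assumes dM: "continuous_on UNIV dM" "\<And>t. 0 < dM t" and "t \<le> t'"
  shows "kM dM t' s \<le> kM dM t s"
proof -
  have "kM dM t' t \<le> 1"
    using kM_less_1[OF dM, of t t'] \<open>t \<le> t'\<close> by (cases "t = t'") (auto simp: kM_def oint_def)
  then have "kM dM t' t * kM dM t s \<le> kM dM t s"
    by (simp add: kM_def mult_left_le_one_le)
  then show ?thesis using kM_mult[OF dM(1)] by simp
qed

lemma continuous_on_kM:
  assumes "continuous_on UNIV dM" "continuous_on S f" "continuous_on S g"
  shows "continuous_on S (\<lambda>x. kM dM (f x) (g x))"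
  unfolding kM_def by (intro continuous_intros continuous_on_oint assms)

section \<open>Subhomogeneous unimodal birth functions\<close>

lemma mono_on_if_strict_mono_on_left:
  fixes f :: "real \<Rightarrow> real"
  assumes cont: "continuous_on {a..b} f" and inc: "monotone_on {a..<b} (<) (<) f"
  shows "mono_on {a..b} f"
proof (rule mono_onI)
  fix x y assume x: "x \<in> {a..b}" and y: "y \<in> {a..b}" and "x \<le> y"
  have less: "f x < f t" if "x < t" "t < b" for t
    using inc x that unfolding monotone_on_def by auto
  show "f x \<le> f y"
  proof (cases "x = y \<or> y < b")
    case True then show ?thesis using less \<open>x \<le> y\<close> by force
  next
    case False
    then have "x < b" "y = b" using x y \<open>x \<le> y\<close> by auto
    have "(f \<longlongrightarrow> f b) (at b within {x..b})"
      using continuous_on_subset[OF cont, of "{x..b}"] x \<open>x < b\<close>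
      unfolding continuous_on_def by auto
    then have "(f \<longlongrightarrow> f b) (at_left b)" using at_within_Icc_at_left[OF \<open>x < b\<close>] by simp
    then have "f x \<le> f b"
      by (rule tendsto_lowerbound)
        (use less \<open>x < b\<close> in \<open>auto simp: eventually_at_left_field intro!: exI[of _ x] less_imp_le\<close>)
    then show ?thesis using \<open>y = b\<close> by simp
  qed
qed

lemma le_at_peak:
  fixes f :: "real \<Rightarrow> real"
  assumes "mono_on {a..b} f" "monotone_on {b..} (<) (>) f" "a \<le> z" "a \<le> b"
  shows "f z \<le> f b"
proof (cases "z \<le> b")
  case True
  then show ?thesis using mono_onD[OF assms(1), of z b] assms(3,4) by simp
next
  case False
  then show ?thesis using monotone_onD[OF assms(2), of b z] by simp
qed

locale birth_function =
  fixes h :: "real \<Rightarrow> real" and h'0 z\<^sub>m :: real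
  assumes h_cont: "continuous_on {0..} h"
    and h_deriv_0: "(h has_real_derivative h'0) (at 0 within {0..})"
    and h_zero: "h 0 = 0" and h_nonneg: "\<And>z. 0 \<le> z \<Longrightarrow> 0 \<le> h z"
    and h_subhom: "\<And>z l. 0 \<le> z \<Longrightarrow> 0 < l \<Longrightarrow> l < 1 \<Longrightarrow> l * h z \<le> h (l * z)"
    and h_mono: "mono_on {0..z\<^sub>m} h" and h_le_max: "\<And>z. 0 \<le> z \<Longrightarrow> h z \<le> h z\<^sub>m"
begin

lemma ratio_antimono:
  assumes "0 < y" "y \<le> z"
  shows "h z / z \<le> h y / y"
proof (cases "y = z")
  case False
  then have "(y / z) * h z \<le> h y"
    using h_subhom[of z "y / z"] assms by auto
  then show ?thesis using assms by (simp add: field_simps)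
qed simp

lemma ratio_tendsto: "((\<lambda>y. h y / y) \<longlongrightarrow> h'0) (at_right 0)"
  using h_deriv_0 h_zero unfolding has_field_derivative_iff at_within_Ici_at_right by simp

lemma le_linear:
  assumes "0 \<le> z"
  shows "h z \<le> h'0 * z"
proof (cases "z = 0")
  case False
  then have "0 < z" using assms by simp
  have "h z / z \<le> h'0"
    by (rule tendsto_lowerbound[OF ratio_tendsto])
      (use ratio_antimono \<open>0 < z\<close> in \<open>auto simp: eventually_at_right_field intro!: exI[of _ z]\<close>)
  then show ?thesis using \<open>0 < z\<close> by (simp add: field_simps)
qed (simp add: h_zero)

lemma deriv_0_nonneg: "0 \<le> h'0"
  using le_linear[of 1] h_nonneg[of 1] by simp

lemma gt_linear_near_0:
  assumes "A < h'0"
  obtains \<delta> where "\<delta> > 0" "\<And>z. 0 < z \<Longrightarrow> z \<le> \<delta> \<Longrightarrow> A * z < h z"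
proof -
  obtain b where b: "b > 0" "\<And>y. 0 < y \<Longrightarrow> y < b \<Longrightarrow> A < h y / y"
    using order_tendstoD(1)[OF ratio_tendsto assms] unfolding eventually_at_right_field by auto
  have "A * z < h z" if "0 < z" "z \<le> b / 2" for z
  proof -
    have "A < h z / z"
      using b(2)[of "b / 2"] ratio_antimono[of z "b / 2"] b(1) that by force
    then show ?thesis using that by (simp add: field_simps)
  qed
  with b(1) that show ?thesis by (meson half_gt_zero)
qed

end

section \<open>The yearly map on constant functions\<close>

locale yearly_map = birth_function +
  fixes k :: real and a c :: "real \<Rightarrow> real" and t\<^sub>0 t\<^sub>1 :: real
  assumes k_pos: "0 < k" and k_less_1: "k < 1"
    and a_cont: "continuous_on {t\<^sub>0..t\<^sub>1} a" and a_nonneg: "\<And>s. s \<in> {t\<^sub>0..t\<^sub>1} \<Longrightarrow> 0 \<le> a s"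
    and c_cont: "continuous_on {t\<^sub>0..t\<^sub>1} c"
    and c_pos: "\<And>s. s \<in> {t\<^sub>0..t\<^sub>1} \<Longrightarrow> 0 < c s" and c_less_1: "\<And>s. s \<in> {t\<^sub>0..t\<^sub>1} \<Longrightarrow> c s < 1"
begin

definition Q :: "real \<Rightarrow> real" where
  "Q z = z * k + integral {t\<^sub>0..t\<^sub>1} (\<lambda>s. a s * h (z * c s))"

definition W :: real where
  "W = integral {t\<^sub>0..t\<^sub>1} (\<lambda>s. a s * c s)"

lemma integrand_cont: "continuous_on ({0..} \<times> {t\<^sub>0..t\<^sub>1}) (\<lambda>(z, s). a s * h (z * c s))"
proof -
  have "continuous_on ({0..} \<times> {t\<^sub>0..t\<^sub>1}) (\<lambda>x. h (fst x * c (snd x)))"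
    by (rule continuous_on_compose2[OF h_cont])
      (auto intro!: continuous_intros continuous_on_compose2[OF c_cont] simp: c_pos less_imp_le)
  then show ?thesis
    unfolding split_beta by (intro continuous_intros continuous_on_compose2[OF a_cont]) auto
qed

lemma integrable_integrand:
  assumes "0 \<le> z"
  shows "(\<lambda>s. a s * h (z * c s)) integrable_on {t\<^sub>0..t\<^sub>1}"
proof -
  have "continuous_on {t\<^sub>0..t\<^sub>1} (\<lambda>s. (\<lambda>(z, s). a s * h (z * c s)) (z, s))"
    by (rule continuous_on_compose2[OF integrand_cont]) (auto intro!: continuous_intros simp: assms)
  then show ?thesis by (simp add: integrable_continuous_interval)
qed

lemma integrable_a: "a integrable_on {t\<^sub>0..t\<^sub>1}"
  by (intro integrable_continuous_interval a_cont)

lemma integrable_ac: "(\<lambda>s. a s * c s) integrable_on {t\<^sub>0..t\<^sub>1}"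
  by (intro integrable_continuous_interval continuous_intros a_cont c_cont)

lemma W_nonneg: "0 \<le> W"
  unfolding W_def using a_nonneg c_pos
  by (intro integral_nonneg[OF integrable_ac]) (simp add: less_imp_le)

lemma Q_cont: "continuous_on {0..} Q"
proof -
  have "continuous_on {0..} (\<lambda>z. integral (cbox t\<^sub>0 t\<^sub>1) (\<lambda>s. a s * h (z * c s)))"
    by (rule integral_continuous_on_param) (use integrand_cont in simp)
  then show ?thesis unfolding Q_def[abs_def] by (intro continuous_intros) simp
qed

lemma Q_nonneg: "0 \<le> z \<Longrightarrow> 0 \<le> Q z"
  unfolding Q_def using k_pos a_nonneg h_nonneg c_pos
  by (intro add_nonneg_nonneg integral_nonneg[OF integrable_integrand])
    (auto intro!: mult_nonneg_nonneg simp: less_imp_le)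

lemma Q_le_linear:
  assumes "0 \<le> z"
  shows "Q z \<le> (k + h'0 * W) * z"
proof -
  have "integral {t\<^sub>0..t\<^sub>1} (\<lambda>s. a s * h (z * c s)) \<le> integral {t\<^sub>0..t\<^sub>1} (\<lambda>s. h'0 * z * (a s * c s))"
  proof (rule integral_le[OF integrable_integrand[OF assms]])
    fix s assume s: "s \<in> {t\<^sub>0..t\<^sub>1}"
    then have "a s * h (z * c s) \<le> a s * (h'0 * (z * c s))"
      using le_linear[of "z * c s"] a_nonneg[OF s] c_pos[OF s] assms by (simp add: mult_left_mono)
    then show "a s * h (z * c s) \<le> h'0 * z * (a s * c s)" by (simp add: ac_simps)
  qed (intro integrable_on_mult_right integrable_ac)
  then show ?thesis unfolding Q_def W_def by (simp add: algebra_simps)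
qed

lemma Q_ge_subhomogeneous:
  assumes "0 \<le> z"
  shows "z * k + h z * W \<le> Q z"
proof -
  have "integral {t\<^sub>0..t\<^sub>1} (\<lambda>s. h z * (a s * c s)) \<le> integral {t\<^sub>0..t\<^sub>1} (\<lambda>s. a s * h (z * c s))"
  proof (rule integral_le[OF _ integrable_integrand[OF assms]])
    fix s assume s: "s \<in> {t\<^sub>0..t\<^sub>1}"
    then have "a s * (c s * h z) \<le> a s * h (c s * z)"
      using h_subhom[OF assms c_pos c_less_1] a_nonneg by (simp add: mult_left_mono)
    then show "h z * (a s * c s) \<le> a s * h (z * c s)" by (simp add: ac_simps)
  qed (intro integrable_on_mult_right integrable_ac)
  then show ?thesis unfolding Q_def W_def by simp
qed

lemma Q_le_affine:
  assumes "0 \<le> z"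
  shows "Q z \<le> z * k + h z\<^sub>m * integral {t\<^sub>0..t\<^sub>1} a"
proof -
  have "integral {t\<^sub>0..t\<^sub>1} (\<lambda>s. a s * h (z * c s)) \<le> integral {t\<^sub>0..t\<^sub>1} (\<lambda>s. h z\<^sub>m * a s)"
  proof (rule integral_le[OF integrable_integrand[OF assms]])
    fix s assume "s \<in> {t\<^sub>0..t\<^sub>1}"
    then show "a s * h (z * c s) \<le> h z\<^sub>m * a s"
      using h_le_max[of "z * c s"] a_nonneg c_pos assms
      by (simp add: mult_left_mono mult.commute less_imp_le)
  qed (intro integrable_on_mult_right integrable_a)
  then show ?thesis unfolding Q_def by simp
qed

lemma Q_mono:
  assumes "0 \<le> x" "x \<le> y" and below_peak: "\<And>s. s \<in> {t\<^sub>0..t\<^sub>1} \<Longrightarrow> y * c s \<le> z\<^sub>m"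
  shows "Q x \<le> Q y"
proof -
  have "integral {t\<^sub>0..t\<^sub>1} (\<lambda>s. a s * h (x * c s)) \<le> integral {t\<^sub>0..t\<^sub>1} (\<lambda>s. a s * h (y * c s))"
  proof (rule integral_le[OF integrable_integrand integrable_integrand])
    fix s assume s: "s \<in> {t\<^sub>0..t\<^sub>1}"
    have "x * c s \<le> y * c s" using assms c_pos[OF s] by (simp add: mult_right_mono)
    then have "h (x * c s) \<le> h (y * c s)"
      using assms c_pos[OF s] order_trans[OF _ below_peak[OF s]]
      by (intro mono_onD[OF h_mono]) auto
    then show "a s * h (x * c s) \<le> a s * h (y * c s)"
      using a_nonneg[OF s] by (rule mult_left_mono)
  qed (use assms in auto)
  then show ?thesis unfolding Q_def using assms k_pos by (simp add: add_mono mult_right_mono)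
qed

lemma iterates_tendsto_0:
  assumes "h'0 * W / (1 - k) < 1" "0 \<le> u"
  shows "(\<lambda>n. (Q ^^ n) u) \<longlonglongrightarrow> 0"
proof (rule funpow_tendsto_0_if_le_linear[where \<rho> = "k + h'0 * W"])
  show "0 \<le> Q z \<and> Q z \<le> (k + h'0 * W) * z" if "0 \<le> z" for z
    using Q_nonneg Q_le_linear that by simp
  show "0 \<le> k + h'0 * W" using k_pos deriv_0_nonneg W_nonneg by simp
  show "k + h'0 * W < 1" using assms(1) k_less_1 by (simp add: pos_divide_less_eq)
qed (fact assms(2))

lemma least_fixpoint_attracts:
  assumes L: "1 < h'0 * W / (1 - k)"
  obtains u\<^sub>0 where "u\<^sub>0 > 0" "Q u\<^sub>0 = u\<^sub>0" "\<And>v. v > 0 \<Longrightarrow> Q v = v \<Longrightarrow> u\<^sub>0 \<le> v"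
    "\<And>u. 0 < u \<Longrightarrow> u \<le> u\<^sub>0 \<Longrightarrow> (\<And>s. s \<in> {t\<^sub>0..t\<^sub>1} \<Longrightarrow> u\<^sub>0 * c s \<le> z\<^sub>m)
       \<Longrightarrow> (\<lambda>n. (Q ^^ n) u) \<longlonglongrightarrow> u\<^sub>0"
proof -
  have growth: "1 - k < h'0 * W" using L k_less_1 by (simp add: pos_less_divide_eq)
  then have "0 < W" using k_less_1 W_nonneg deriv_0_nonneg by (cases "W = 0") auto
  with growth have "(1 - k) / W < h'0" by (simp add: pos_divide_less_eq mult.commute)
  then obtain \<delta> where \<delta>: "\<delta> > 0" "\<And>z. 0 < z \<Longrightarrow> z \<le> \<delta> \<Longrightarrow> (1 - k) / W * z < h z"
    using gt_linear_near_0 by blast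
  have above: "z < Q z" if "0 < z" "z \<le> \<delta>" for z
  proof -
    have "(1 - k) * z < h z * W" using \<delta>(2)[OF that] \<open>0 < W\<close> by (simp add: field_simps)
    then show ?thesis using Q_ge_subhomogeneous[of z] that by (simp add: algebra_simps)
  qed
  \<comment> \<open>as \<open>h \<le> h z\<^sub>m\<close>, \<open>Q\<close> lies below an affine map of slope \<open>k < 1\<close>\<close>
  define z\<^sub>1 where "z\<^sub>1 = (h z\<^sub>m * integral {t\<^sub>0..t\<^sub>1} a + 1) / (1 - k)"
  have "0 \<le> h z\<^sub>m * integral {t\<^sub>0..t\<^sub>1} a"
    using h_le_max[of 0] h_zero a_nonneg integral_nonneg[OF integrable_a] by simp
  then have "z\<^sub>1 > 0" "z\<^sub>1 * (1 - k) = h z\<^sub>m * integral {t\<^sub>0..t\<^sub>1} a + 1"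
    unfolding z\<^sub>1_def using k_less_1 by auto
  then have "Q z\<^sub>1 < z\<^sub>1" using Q_le_affine[of z\<^sub>1] by (simp add: algebra_simps)
  then obtain u\<^sub>0 where u\<^sub>0: "u\<^sub>0 > 0" "Q u\<^sub>0 = u\<^sub>0" "\<And>v. v > 0 \<Longrightarrow> Q v = v \<Longrightarrow> u\<^sub>0 \<le> v"
    "\<And>z. 0 < z \<Longrightarrow> z < u\<^sub>0 \<Longrightarrow> z < Q z"
    using least_positive_fixpoint[OF Q_cont \<delta>(1) above \<open>z\<^sub>1 > 0\<close>] by blast
  have attracts: "(\<lambda>n. (Q ^^ n) u) \<longlonglongrightarrow> u\<^sub>0"
    if "0 < u" "u \<le> u\<^sub>0" "\<And>s. s \<in> {t\<^sub>0..t\<^sub>1} \<Longrightarrow> u\<^sub>0 * c s \<le> z\<^sub>m" for u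
  proof (rule funpow_tendsto_least_fixpoint[OF Q_cont u\<^sub>0(2,4) _ that(1,2)])
    have "y * c s \<le> z\<^sub>m" if "y \<le> u\<^sub>0" "s \<in> {t\<^sub>0..t\<^sub>1}" for y s
      using mult_right_mono[OF that(1) less_imp_le[OF c_pos]] that(2) \<open>s \<in> _ \<Longrightarrow> u\<^sub>0 * c s \<le> z\<^sub>m\<close>
      by (meson order_trans)
    then show "mono_on {0..u\<^sub>0} Q" by (auto intro!: mono_onI Q_mono)
  qed
  show ?thesis by (rule that[OF u\<^sub>0(1-3) attracts])
qed

end

section \<open>The stage-structured model\<close>

lemma birth_function_if_unimodal:
  fixes h h' :: "real \<Rightarrow> real"
  assumes deriv: "\<forall>z\<ge>0. (h has_real_derivative h' z) (at z within {0..})"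
    and "\<forall>z\<ge>0. h z \<ge> 0" "h 0 = 0" "z\<^sub>m > 0"
    and inc: "monotone_on {0..<z\<^sub>m} (<) (<) h" and dec: "monotone_on {z\<^sub>m..} (<) (>) h"
    and "\<forall>z\<ge>0. \<forall>l. 0 < l \<and> l < 1 \<longrightarrow> h (l * z) \<ge> l * h z"
  shows "birth_function h (h' 0) z\<^sub>m"
proof
  show cont: "continuous_on {0..} h"
    using deriv by (auto simp: continuous_on_eq_continuous_within intro: DERIV_continuous)
  show "mono_on {0..z\<^sub>m} h"
    by (rule mono_on_if_strict_mono_on_left[OF continuous_on_subset[OF cont] inc]) auto
  then show "h z \<le> h z\<^sub>m" if "0 \<le> z" for z
    using le_at_peak[OF _ dec that] \<open>z\<^sub>m > 0\<close> by simp
qed (use assms in auto)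

lemma delayed_time_mono:
  assumes "\<And>t. (tau has_real_derivative tau' t) (at t)" "\<And>t. tau' t < 1" "s \<le> s'"
  shows "s - tau s \<le> s' - tau s'"
  by (rule DERIV_nonneg_imp_nondecreasing[OF \<open>s \<le> s'\<close>])
    (use assms in \<open>auto intro!: derivative_eq_intros exI[of _ "1 - tau' _"] less_imp_le\<close>)

lemma kM_delayed_le:
  assumes dM: "continuous_on UNIV dM" "\<And>t. dM t > 0"
    and tau: "\<And>t. (tau has_real_derivative tau' t) (at t)" "\<And>t. tau' t < 1"
    and "t\<^sub>0 - tau t\<^sub>0 = \<alpha>" "t\<^sub>0 \<le> s"
  shows "kM dM (s - tau s) 0 \<le> kM dM \<alpha> 0"
proof -
  have "\<alpha> \<le> s - tau s" using delayed_time_mono[OF tau \<open>t\<^sub>0 \<le> s\<close>] assms(5) by simp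
  then show ?thesis by (rule kM_antimono[OF dM])
qed

lemma continuous_on_gfun:
  assumes dI: "continuous_on UNIV dI" and tau: "continuous_on UNIV tau"
    and tau': "continuous_on UNIV tau'" and p: "continuous_on UNIV p"
  shows "continuous_on S (gfun dI tau tau' p)"
proof -
  have delay: "continuous_on S (\<lambda>s. s - tau s)"
    by (intro continuous_intros continuous_on_subset[OF tau]) auto
  have "continuous_on S (\<lambda>s. p (s - tau s))"
    by (rule continuous_on_compose2[OF p delay]) auto
  moreover have "continuous_on S tau'" by (rule continuous_on_subset[OF tau']) auto
  moreover have "continuous_on S (\<lambda>s. oint (s - tau s) s dI)"
    by (intro continuous_on_oint[OF dI] delay continuous_on_id)
  ultimately show ?thesis
    unfolding gfun_def[abs_def] epsI_def by (intro continuous_intros)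
qed

lemma Lnum_eq:
  assumes "continuous_on UNIV dM"
  shows "Lnum dM dI tau tau' p h'0 T t\<^sub>0 t\<^sub>1 = h'0 *
      integral {t\<^sub>0..t\<^sub>1} (\<lambda>s. kM dM T s * gfun dI tau tau' p s * kM dM (s - tau s) 0) / (1 - kM dM T 0)"
proof -
  have kM_pos: "0 < kM dM t s" for t s by (simp add: kM_def)
  have factor: "kM dM T s * kM dM s (s - tau s) * kM dM (s - tau s) 0 = kM dM T 0" for s
    using kM_mult[OF assms] by simp
  have "gfun dI tau tau' p s * h'0 / kM dM s (s - tau s)
      = h'0 / kM dM T 0 * (kM dM T s * gfun dI tau tau' p s * kM dM (s - tau s) 0)" for s
    unfolding factor[of s, symmetric]
    using kM_pos[of T s] kM_pos[of s "s - tau s"] kM_pos[of "s - tau s" 0] by (simp add: field_simps)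
  then have "integral {t\<^sub>0..t\<^sub>1} (\<lambda>s. gfun dI tau tau' p s * h'0 / kM dM s (s - tau s))
      = h'0 / kM dM T 0 * integral {t\<^sub>0..t\<^sub>1} (\<lambda>s. kM dM T s * gfun dI tau tau' p s * kM dM (s - tau s) 0)"
    by (simp only:) simp
  then show ?thesis
    unfolding Lnum_def using kM_pos[of T 0] by (simp add: field_split_simps)
qed

lemma yearly_map_axioms_model:
  assumes dM: "continuous_on UNIV dM" "\<And>t. dM t > 0"
    and dI: "continuous_on UNIV dI" and p: "continuous_on UNIV p" "\<And>t. p t \<ge> 0"
    and tau: "\<And>t. (tau has_real_derivative tau' t) (at t)" "\<And>t. tau' t < 1"
    and tau': "continuous_on UNIV tau'" and "T > 0" "0 < \<alpha>" "t\<^sub>0 - tau t\<^sub>0 = \<alpha>"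
  shows "yearly_map_axioms (kM dM T 0) (\<lambda>s. kM dM T s * gfun dI tau tau' p s)
           (\<lambda>s. kM dM (s - tau s) 0) t\<^sub>0 t\<^sub>1"
proof
  have tau_cont: "continuous_on S tau" for S
    using DERIV_continuous_on tau(1) continuous_on_subset by blast
  show "continuous_on {t\<^sub>0..t\<^sub>1} (\<lambda>s. kM dM T s * gfun dI tau tau' p s)"
    by (intro continuous_intros continuous_on_kM[OF dM(1), of _ "\<lambda>_. T" "\<lambda>s. s"]
        continuous_on_gfun dI tau_cont tau' p(1))
  show "continuous_on {t\<^sub>0..t\<^sub>1} (\<lambda>s. kM dM (s - tau s) 0)"
    by (intro continuous_intros continuous_on_kM[OF dM(1), of _ "\<lambda>s. s - tau s" "\<lambda>_. 0"]
        tau_cont)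
  show "kM dM (s - tau s) 0 < 1" if "s \<in> {t\<^sub>0..t\<^sub>1}" for s
    using delayed_time_mono[OF tau, of t\<^sub>0 s] that assms by (intro kM_less_1[OF dM]) auto
  show "0 \<le> kM dM T s * gfun dI tau tau' p s" for s
    using tau(2)[of s] p(2)[of "s - tau s"] by (simp add: kM_def gfun_def epsI_def)
qed (use kM_less_1[OF dM] \<open>T > 0\<close> in \<open>auto simp: kM_def\<close>)

theorem theorem3p1:
  fixes T \<alpha> \<beta> t\<^sub>\<alpha> t\<^sub>\<beta> zs :: real
    and dM dI DI tau tau' p h h' :: "real \<Rightarrow> real"
  assumes T_pos: "T > 0"
    and dM_C1: "dM C1_differentiable_on UNIV" and dM_pos: "\<forall>t. dM t > 0"
    and dI_C1: "dI C1_differentiable_on UNIV" and dI_pos: "\<forall>t. dI t > 0"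
    and DI_C1: "DI C1_differentiable_on UNIV" and DI_nonneg: "\<forall>t. DI t \<ge> 0"
    and tau_deriv: "\<forall>t. (tau has_real_derivative tau' t) (at t)"
    and tau'_cont: "continuous_on UNIV tau'" and tau_pos: "\<forall>t. tau t > 0"
    and p_C1: "p C1_differentiable_on UNIV" and p_nonneg: "\<forall>t. p t \<ge> 0"
    and periodic: "\<forall>t. dM (t + T) = dM t \<and> dI (t + T) = dI t \<and> DI (t + T) = DI t
                      \<and> tau (t + T) = tau t \<and> p (t + T) = p t"
    and h_deriv: "\<forall>z\<ge>0. (h has_real_derivative h' z) (at z within {0..})"
    and h'_cont: "continuous_on {0..} h'"
    and h_nonneg: "\<forall>z\<ge>0. h z \<ge> 0"
    and a_order: "0 < \<alpha>" "\<alpha> \<le> \<beta>" "\<beta> < t\<^sub>\<alpha>" "t\<^sub>\<alpha> \<le> t\<^sub>\<beta>" "t\<^sub>\<beta> < T"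
    and a_ta: "t\<^sub>\<alpha> - tau t\<^sub>\<alpha> = \<alpha>" and a_tb: "t\<^sub>\<beta> - tau t\<^sub>\<beta> = \<beta>"
    and a_p: "\<forall>t \<in> {0..\<alpha>} \<union> {\<beta>..T}. p t = 0"
    and b_tau': "\<forall>t. tau' t < 1"
    and c_h0: "h 0 = 0" and c_lim: "(h \<longlongrightarrow> 0) at_top"
    and c_zs: "zs > 0"
    and c_inc: "monotone_on {0..<zs} (<) (<) h"
    and c_dec: "monotone_on {zs..} (<) (>) h"
    and d_subhom: "\<forall>z\<ge>0. \<forall>l. 0 < l \<and> l < 1 \<longrightarrow> h (l * z) \<ge> l * h z"
  shows "(Lnum dM dI tau tau' p (h' 0) T t\<^sub>\<alpha> t\<^sub>\<beta> > 1 \<longrightarrow>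
            (\<exists>ustar. ustar > 0 \<and> Qbar dM dI tau tau' p h T t\<^sub>\<alpha> t\<^sub>\<beta> ustar = ustar
               \<and> (\<forall>v>0. Qbar dM dI tau tau' p h T t\<^sub>\<alpha> t\<^sub>\<beta> v = v \<longrightarrow> ustar \<le> v)
               \<and> (\<forall>u. 0 < u \<and> u \<le> ustar \<and> ustar * kM dM \<alpha> 0 \<le> zs \<longrightarrow>
                    (\<lambda>n. (Qbar dM dI tau tau' p h T t\<^sub>\<alpha> t\<^sub>\<beta> ^^ n) u) \<longlonglongrightarrow> ustar)))
       \<and> (Lnum dM dI tau tau' p (h' 0) T t\<^sub>\<alpha> t\<^sub>\<beta> < 1 \<longrightarrow>
            (\<forall>u\<ge>0. (\<lambda>n. (Qbar dM dI tau tau' p h T t\<^sub>\<alpha> t\<^sub>\<beta> ^^ n) u) \<longlonglongrightarrow> 0))"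
proof -
  have dM: "continuous_on UNIV dM" using dM_C1 C1_differentiable_imp_continuous_on by blast
  have dI: "continuous_on UNIV dI" and p: "continuous_on UNIV p"
    using dI_C1 p_C1 C1_differentiable_imp_continuous_on by blast+
  interpret yearly_map h "h' 0" zs "kM dM T 0" "\<lambda>s. kM dM T s * gfun dI tau tau' p s"
    "\<lambda>s. kM dM (s - tau s) 0" t\<^sub>\<alpha> t\<^sub>\<beta>
    by (rule yearly_map.intro[OF
          birth_function_if_unimodal[OF h_deriv h_nonneg c_h0 c_zs c_inc c_dec d_subhom]
          yearly_map_axioms_model[OF dM dM_pos[rule_format] dI p p_nonneg[rule_format]
            tau_deriv[rule_format] b_tau'[rule_format] tau'_cont T_pos a_order(1) a_ta]])
  have Q: "Qbar dM dI tau tau' p h T t\<^sub>\<alpha> t\<^sub>\<beta> = Q" by (simp add: fun_eq_iff Q_def Qbar_def)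
  have L: "Lnum dM dI tau tau' p (h' 0) T t\<^sub>\<alpha> t\<^sub>\<beta> = h' 0 * W / (1 - kM dM T 0)"
    using Lnum_eq[OF dM] by (simp add: W_def)
  have below_peak: "u * kM dM (s - tau s) 0 \<le> zs"
    if "u * kM dM \<alpha> 0 \<le> zs" "0 < u" "s \<in> {t\<^sub>\<alpha>..t\<^sub>\<beta>}" for u s
  proof -
    have "kM dM (s - tau s) 0 \<le> kM dM \<alpha> 0"
      using kM_delayed_le[OF dM dM_pos[rule_format] tau_deriv[rule_format] b_tau'[rule_format] a_ta]
        that(3) by simp
    then show ?thesis using that(1,2) by (meson mult_left_mono order_trans less_imp_le)
  qed
  show ?thesis unfolding Q L
  proof (intro conjI impI)
    assume "1 < h' 0 * W / (1 - kM dM T 0)"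
    then show "\<exists>ustar>0. Q ustar = ustar \<and> (\<forall>v>0. Q v = v \<longrightarrow> ustar \<le> v)
        \<and> (\<forall>u. 0 < u \<and> u \<le> ustar \<and> ustar * kM dM \<alpha> 0 \<le> zs \<longrightarrow> (\<lambda>n. (Q ^^ n) u) \<longlonglongrightarrow> ustar)"
    proof (rule least_fixpoint_attracts)
      fix u\<^sub>0 assume "u\<^sub>0 > 0" "Q u\<^sub>0 = u\<^sub>0" "\<And>v. v > 0 \<Longrightarrow> Q v = v \<Longrightarrow> u\<^sub>0 \<le> v"
        "\<And>u. 0 < u \<Longrightarrow> u \<le> u\<^sub>0
          \<Longrightarrow> (\<And>s. s \<in> {t\<^sub>\<alpha>..t\<^sub>\<beta>} \<Longrightarrow> u\<^sub>0 * kM dM (s - tau s) 0 \<le> zs)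
          \<Longrightarrow> (\<lambda>n. (Q ^^ n) u) \<longlonglongrightarrow> u\<^sub>0"
      then show ?thesis using below_peak by (intro exI[of _ u\<^sub>0]) auto
    qed
  qed (use iterates_tendsto_0 in auto)
qed

end
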